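(* Assume $s\ge n-r+1$ and let $1\le j_1<\dots<j_{n-r+1}\le s$. Put $$A(j_1,\dots,j_{n-r+1})=\sum_{\sigma\in\mathfrak S_{n+1}}\mathrm{sign}(\sigma)\frac{\partial F_1}{\partial X_{\sigma(0)}}\cdots\frac{\partial F_r}{\partial X_{\sigma(r-1)}}\cdot\frac{\partial G_{j_1}}{\partial X_{\sigma(r)}}\cdots\frac{\partial G_{j_{n-r+1}}}{\partial X_{\sigma(n)}},$$ where $\mathfrak S_{n+1}$ is the group of permutations of $\{0,\dots,n\}$, and $$A'=A(j_1,\dots,j_{n-r+1})\cdot\frac{G_1\cdots G_s}{G_{j_1}\cdots G_{j_{n-r+1}}}\in P^{\mathbf d+\mathbf e-n-1}.$$ Then $A'\mu_i\in J$ and $A'\lambda_j\in J$ for all $1\le i\le r$ and $1\le j\le s$.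
   Context: Let $k$ be a field of characteristic zero, integers $r,s\ge0$ with $r+s\ge1$, $n\ge2$, $d_i,e_j\ge1$, $\mathbf d=\sum_id_i$, $\mathbf e=\sum_je_j$. $P=k[X_0,\dots,X_n]$ with degree-$l$ part $P^l$, and $A=P[\mu_1,\dots,\mu_r,\lambda_1,\dots,\lambda_s]$. Fix $F_i\in P^{d_i}$ ($1\le i\le r$), $G_j\in P^{e_j}$ ($1\le j\le s$) such that the hypersurfaces $\{F_i=0\}$, $\{G_j=0\}$ of $\mathbb P^n$ are smooth and intersect transversally. $J\subset A$ is the ideal generated by $\sum_i\frac{\partial F_i}{\partial X_k}\mu_i+\sum_j\frac{\partial G_j}{\partial X_k}\lambda_j$ ($0\le k\le n$), $F_i$ ($1\le i\le r$), and $G_j\lambda_j$ ($1\le j\le s$). *)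

theory Defs
  imports "HOL-Library.Poly_Mapping" "HOL-Combinatorics.Permutations"
          "HOL-Algebra.Algebraic_Closure_Type"
begin

text \<open>Variables of the ring A = k[X_0..X_n, mu_1..mu_r, lambda_1..lambda_s].\<close>
datatype var = Xv nat | Mu nat | La nat

type_synonym 'k mpoly = "(var \<Rightarrow>\<^sub>0 nat) \<Rightarrow>\<^sub>0 'k"

definition Var :: "var \<Rightarrow> 'k::comm_ring_1 mpoly" where
  "Var v = Poly_Mapping.single (Poly_Mapping.single v 1) 1"

definition pdX :: "nat \<Rightarrow> 'k::comm_ring_1 mpoly \<Rightarrow> 'k mpoly" where
  "pdX k p = (\<Sum>m\<in>Poly_Mapping.keys p.
      Poly_Mapping.single (m - Poly_Mapping.single (Xv k) 1)
        (of_nat (Poly_Mapping.lookup m (Xv k)) * Poly_Mapping.lookup p m))"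

text \<open>p lies in P^l: a polynomial in X_0..X_n only, homogeneous of degree l.\<close>
definition in_Pdeg :: "nat \<Rightarrow> nat \<Rightarrow> 'k::comm_ring_1 mpoly \<Rightarrow> bool" where
  "in_Pdeg n l p \<longleftrightarrow> (\<forall>m\<in>Poly_Mapping.keys p.
      (\<forall>v\<in>Poly_Mapping.keys m. \<exists>k\<le>n. v = Xv k) \<and>
      (\<Sum>v\<in>Poly_Mapping.keys m. Poly_Mapping.lookup m v) = l)"

text \<open>Evaluation of a polynomial with coefficients in k at a point x of
  K^(n+1), via a ring embedding e of k into K (other variables are sent to 0).\<close>
definition evalX :: "('k::comm_ring_1 \<Rightarrow> 'K::comm_ring_1) \<Rightarrow> (nat \<Rightarrow> 'K) \<Rightarrow> 'k mpoly \<Rightarrow> 'K" where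
  "evalX e x p = (\<Sum>m\<in>Poly_Mapping.keys p. e (Poly_Mapping.lookup p m) *
      (\<Prod>v\<in>Poly_Mapping.keys m.
         (case v of Xv k \<Rightarrow> x k | _ \<Rightarrow> 0) ^ Poly_Mapping.lookup m v))"

definition ideal_gen :: "'a::comm_ring_1 set \<Rightarrow> 'a set" where
  "ideal_gen S = {p. \<exists>T c. finite T \<and> T \<subseteq> S \<and> p = (\<Sum>g\<in>T. c g * g)}"

text \<open>Smoothness and transversal intersection of a finite family of
  hypersurfaces {H_t = 0} (t in I) of P^n, checked at geometric points
  (points over the algebraic closure of k): at every nonzero point x of
  (alg. closure)^(n+1), the gradients of those H_t vanishing at x are
  linearly independent.  For a single member this is smoothness.\<close>
definition smooth_transversal :: "nat \<Rightarrow> 'i set \<Rightarrow> ('i \<Rightarrow> 'k::field mpoly) \<Rightarrow> bool" where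
  "smooth_transversal n I H \<longleftrightarrow>
    (\<forall>x :: nat \<Rightarrow> 'k alg_closure. (\<exists>k\<le>n. x k \<noteq> 0) \<longrightarrow>
      (\<forall>c :: 'i \<Rightarrow> 'k alg_closure.
        (\<forall>k\<le>n. (\<Sum>t\<in>{t\<in>I. evalX to_ac x (H t) = 0}. c t * evalX to_ac x (pdX k (H t))) = 0)
        \<longrightarrow> (\<forall>t\<in>{t\<in>I. evalX to_ac x (H t) = 0}. c t = 0)))"

end

theory Submission
  imports Defs "Jordan_Normal_Form.Determinant"
begin

(* Write E_k = sum_i dF_i/dX_k mu_i + sum_j dG_j/dX_k lambda_j for the derivative generators of J
   and P for the product of the unselected G_j.  Since G_j lambda_j is in J,
   P E_k is congruent modulo J to sum_p N_pk (P v_p), where v_0, ..., v_n are mu_1, ..., mu_r,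
   lambda_(j_1), ..., lambda_(j_(n-r+1)) and N is the (n+1) x (n+1) Jacobian matrix of
   F_1, ..., F_r, G_(j_1), ..., G_(j_(n-r+1)), whose determinant is A.  Multiplying this linear system
   by the adjugate of N (Cramer's rule) gives A P v_p in J for every p; for an unselected j already
   P lambda_j is in J. *)

interpretation ring_module: Modules.module "(*) :: 'a::comm_ring_1 \<Rightarrow> 'a \<Rightarrow> 'a"
  by unfold_locales (simp_all add: algebra_simps)

(* The locale's simp rule a * (b * x) = (a * b) * x would fight mult.assoc in ac_simps. *)
declare ring_module.scale_scale [simp del]

lemma ideal_gen_eq_span: "ideal_gen S = ring_module.span S"
  unfolding ideal_gen_def ring_module.span_explicit by auto

lemma prod_mult_in_span:
  assumes "finite B" "j \<in> B" "f j * x \<in> ring_module.span S"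
  shows "(\<Prod>i\<in>B. f i) * x \<in> ring_module.span S"
proof -
  have "(\<Prod>i\<in>B. f i) * x = (\<Prod>i\<in>B - {j}. f i) * (f j * x)"
    unfolding prod.remove[OF assms(1,2)] by (simp only: mult_ac)
  then show ?thesis using ring_module.span_scale[OF assms(3)] by (simp only:)
qed

(* Cramer's rule, via N * adj_mat N = det N * 1. *)
lemma det_mult_in_span:
  fixes N :: "'a::comm_ring_1 mat"
  assumes N: "N \<in> carrier_mat m m"
    and system: "\<And>k. k < m \<Longrightarrow> (\<Sum>p<m. N $$ (p, k) * x p) \<in> ring_module.span S"
    and q: "q < m"
  shows "det N * x q \<in> ring_module.span S"
proof -
  have "det N * x q = (\<Sum>p<m. (if p = q then det N * x p else 0))"
    using q by simp
  also have "\<dots> = (\<Sum>p<m. (N * adj_mat N) $$ (p, q) * x p)"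
    by (rule sum.cong) (use adj_mat(2)[OF N] q in auto)
  also have "\<dots> = (\<Sum>p<m. (\<Sum>k<m. N $$ (p, k) * adj_mat N $$ (k, q)) * x p)"
    by (rule sum.cong) (use adj_mat(1)[OF N] N q in \<open>auto simp: scalar_prod_def lessThan_atLeast0\<close>)
  also have "\<dots> = (\<Sum>k<m. adj_mat N $$ (k, q) * (\<Sum>p<m. N $$ (p, k) * x p))"
    unfolding sum_distrib_left sum_distrib_right by (subst sum.swap) (simp add: ac_simps)
  also have "\<dots> \<in> ring_module.span S"
    by (rule ring_module.span_sum, rule ring_module.span_scale) (simp add: system)
  finally show ?thesis .
qed

lemma det_mat_Leibniz:
  "det (mat (Suc n) (Suc n) (\<lambda>(p, k). M p k)) =
     (\<Sum>\<sigma> | \<sigma> permutes {0..n}. of_int (sign \<sigma>) * (\<Prod>p\<in>{0..n}. M p (\<sigma> p)))"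
proof -
  define N where "N = mat (Suc n) (Suc n) (\<lambda>(p, k). M p k)"
  have entry: "N $$ (p, k) = M p k" if "p \<le> n" "k \<le> n" for p k
    unfolding N_def using that by simp
  have "N \<in> carrier_mat (Suc n) (Suc n)" unfolding N_def by simp
  then have "det N = (\<Sum>\<sigma> | \<sigma> permutes {0..n}. of_int (sign \<sigma>) * (\<Prod>p\<in>{0..n}. N $$ (p, \<sigma> p)))"
    by (simp add: det_def' atLeastLessThanSuc_atLeastAtMost)
  also have "\<dots> = (\<Sum>\<sigma> | \<sigma> permutes {0..n}. of_int (sign \<sigma>) * (\<Prod>p\<in>{0..n}. M p (\<sigma> p)))"
  proof (rule sum.cong[OF refl])
    fix \<sigma> assume "\<sigma> \<in> {\<sigma>. \<sigma> permutes {0..n}}"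
    then have \<sigma>_le: "\<sigma> p \<le> n" if "p \<le> n" for p
      using permutes_in_image[of \<sigma> "{0..n}" p] that by simp
    show "of_int (sign \<sigma>) * (\<Prod>p\<in>{0..n}. N $$ (p, \<sigma> p)) = of_int (sign \<sigma>) * (\<Prod>p\<in>{0..n}. M p (\<sigma> p))"
      by (rule arg_cong[where f = "(*) _"], rule prod.cong) (simp_all add: entry \<sigma>_le)
  qed
  finally show ?thesis unfolding N_def .
qed

definition selected :: "nat \<Rightarrow> (nat \<Rightarrow> nat) \<Rightarrow> (nat \<Rightarrow> 'a) \<Rightarrow> (nat \<Rightarrow> 'a) \<Rightarrow> nat \<Rightarrow> 'a" where
  "selected r jj f g p = (if p < r then f (p + 1) else g (jj (p - r + 1)))"

lemma selected_mult:
  "selected r jj (\<lambda>i. a i * x i) (\<lambda>j. b j * y j) p = selected r jj a b p * selected r jj x y p"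
  by (simp add: selected_def)

lemma selected_image:
  assumes "r \<le> n + 1"
  shows "selected r jj f g ` {..n} = f ` {1..r} \<union> g ` jj ` {1..n + 1 - r}"
proof (intro equalityI subsetI)
  fix z assume "z \<in> selected r jj f g ` {..n}"
  then show "z \<in> f ` {1..r} \<union> g ` jj ` {1..n + 1 - r}"
    unfolding selected_def by (auto split: if_splits)
next
  fix z assume "z \<in> f ` {1..r} \<union> g ` jj ` {1..n + 1 - r}"
  then consider i where "i \<in> {1..r}" "z = f i" | t where "t \<in> {1..n + 1 - r}" "z = g (jj t)"
    by blast
  then show "z \<in> selected r jj f g ` {..n}"
  proof cases
    case 1
    then show ?thesis using assms by (intro image_eqI[of _ _ "i - 1"]) (auto simp: selected_def)
  next
    case 2
    then show ?thesis using assms by (intro image_eqI[of _ _ "t + r - 1"]) (auto simp: selected_def)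
  qed
qed

lemma sum_selected_split:
  fixes f g :: "nat \<Rightarrow> 'a::comm_monoid_add"
  assumes "r \<le> n + 1" "inj_on jj {1..n + 1 - r}" "jj ` {1..n + 1 - r} \<subseteq> {1..s}"
  shows "(\<Sum>i=1..r. f i) + (\<Sum>j=1..s. g j) =
    (\<Sum>p\<le>n. selected r jj f g p) + (\<Sum>j\<in>{1..s} - jj ` {1..n + 1 - r}. g j)"
proof -
  let ?h = "selected r jj f g" and ?rest = "\<Sum>j\<in>{1..s} - jj ` {1..n + 1 - r}. g j"
  have "(\<Sum>i=1..r. f i) = (\<Sum>p<r. ?h p)"
    by (rule sum.reindex_bij_witness[of _ "\<lambda>p. p + 1" "\<lambda>i. i - 1"]) (auto simp: selected_def)
  moreover have "(\<Sum>j=1..s. g j) = (\<Sum>j\<in>jj ` {1..n + 1 - r}. g j) + ?rest"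
    using sum.subset_diff[OF assms(3)] by (simp add: add.commute)
  moreover have "(\<Sum>j\<in>jj ` {1..n + 1 - r}. g j) = (\<Sum>p\<in>{r..n}. ?h p)"
    unfolding sum.reindex[OF assms(2)] o_def
    by (rule sum.reindex_bij_witness[of _ "\<lambda>p. p - r + 1" "\<lambda>t. t + r - 1"])
      (use assms(1) in \<open>auto simp: selected_def\<close>)
  moreover have "(\<Sum>p\<le>n. ?h p) = (\<Sum>p<r. ?h p) + (\<Sum>p\<in>{r..n}. ?h p)"
  proof -
    have "{..n} = {..<r} \<union> {r..n}" using assms(1) by auto
    then show ?thesis by (simp only:) (rule sum.union_disjoint, auto)
  qed
  ultimately show ?thesis by (simp only: add.assoc)
qed

lemma selected_system_in_span:
  fixes a b x y g :: "nat \<Rightarrow> 'a::comm_ring_1"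
  assumes sel: "r \<le> n + 1" "inj_on jj {1..n + 1 - r}" "jj ` {1..n + 1 - r} \<subseteq> {1..s}"
    and eq: "(\<Sum>i=1..r. a i * x i) + (\<Sum>j=1..s. b j * y j) \<in> ring_module.span S"
    and annihilated: "\<And>j. j \<in> {1..s} \<Longrightarrow> g j * y j \<in> ring_module.span S"
  shows "(\<Sum>p\<le>n. selected r jj a b p *
           ((\<Prod>j\<in>{1..s} - jj ` {1..n + 1 - r}. g j) * selected r jj x y p)) \<in> ring_module.span S"
proof -
  let ?rest = "{1..s} - jj ` {1..n + 1 - r}"
  let ?P = "\<Prod>j\<in>?rest. g j"
  let ?E = "(\<Sum>i=1..r. a i * x i) + (\<Sum>j=1..s. b j * y j)"
  have "?P * (\<Sum>j\<in>?rest. b j * y j) = (\<Sum>j\<in>?rest. b j * (?P * y j))"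
    by (simp add: sum_distrib_left mult_ac)
  also have "\<dots> \<in> ring_module.span S"
    by (rule ring_module.span_sum, rule ring_module.span_scale, rule prod_mult_in_span)
      (auto intro: annihilated)
  finally have "?P * ?E - ?P * (\<Sum>j\<in>?rest. b j * y j) \<in> ring_module.span S"
    by (rule ring_module.span_diff[OF ring_module.span_scale[OF eq]])
  also have "?P * ?E - ?P * (\<Sum>j\<in>?rest. b j * y j) =
      (\<Sum>p\<le>n. selected r jj a b p * (?P * selected r jj x y p))"
    unfolding sum_selected_split[OF sel] selected_mult
    by (simp add: distrib_left sum_distrib_left mult_ac)
  finally show ?thesis .
qed

lemma selected_det_mult_in_span:
  fixes dF dG :: "nat \<Rightarrow> nat \<Rightarrow> 'a::comm_ring_1" and x y g :: "nat \<Rightarrow> 'a"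
  assumes sel: "r \<le> n + 1" "inj_on jj {1..n + 1 - r}" "jj ` {1..n + 1 - r} \<subseteq> {1..s}"
    and eqs: "\<And>k. k \<le> n \<Longrightarrow>
      (\<Sum>i=1..r. dF i k * x i) + (\<Sum>j=1..s. dG j k * y j) \<in> ring_module.span S"
    and annihilated: "\<And>j. j \<in> {1..s} \<Longrightarrow> g j * y j \<in> ring_module.span S"
    and "q \<le> n"
  shows "det (mat (Suc n) (Suc n) (\<lambda>(p, k). selected r jj (\<lambda>i. dF i k) (\<lambda>j. dG j k) p)) *
      ((\<Prod>j\<in>{1..s} - jj ` {1..n + 1 - r}. g j) * selected r jj x y q) \<in> ring_module.span S"
    (is "det ?N * (?P * _) \<in> _")
proof (rule det_mult_in_span)
  fix k assume "k < Suc n"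
  then have "(\<Sum>p<Suc n. ?N $$ (p, k) * (?P * selected r jj x y p)) =
      (\<Sum>p\<le>n. selected r jj (\<lambda>i. dF i k) (\<lambda>j. dG j k) p * (?P * selected r jj x y p))"
    unfolding lessThan_Suc_atMost by (intro sum.cong refl) (simp add: less_Suc_eq_le)
  also have "\<dots> \<in> ring_module.span S"
    using \<open>k < Suc n\<close> by (intro selected_system_in_span[OF sel] eqs annihilated) simp_all
  finally show "(\<Sum>p<Suc n. ?N $$ (p, k) * (?P * selected r jj x y p)) \<in> ring_module.span S" .
qed (use \<open>q \<le> n\<close> in auto)

lemma det_complement_prod_mult_in_span:
  fixes dF dG :: "nat \<Rightarrow> nat \<Rightarrow> 'a::comm_ring_1" and x y g :: "nat \<Rightarrow> 'a"
  assumes sel: "r \<le> n + 1" "inj_on jj {1..n + 1 - r}" "jj ` {1..n + 1 - r} \<subseteq> {1..s}"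
    and eqs: "\<And>k. k \<le> n \<Longrightarrow>
      (\<Sum>i=1..r. dF i k * x i) + (\<Sum>j=1..s. dG j k * y j) \<in> ring_module.span S"
    and annihilated: "\<And>j. j \<in> {1..s} \<Longrightarrow> g j * y j \<in> ring_module.span S"
  defines "D \<equiv> det (mat (Suc n) (Suc n) (\<lambda>(p, k). selected r jj (\<lambda>i. dF i k) (\<lambda>j. dG j k) p))"
    and "P \<equiv> \<Prod>j\<in>{1..s} - jj ` {1..n + 1 - r}. g j"
  shows "(\<forall>i\<in>{1..r}. D * P * x i \<in> ring_module.span S) \<and>
    (\<forall>j\<in>{1..s}. D * P * y j \<in> ring_module.span S)"
proof -
  have selected_in: "D * P * selected r jj x y q \<in> ring_module.span S" if "q \<le> n" for q
    using selected_det_mult_in_span[OF sel eqs annihilated that]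
    unfolding D_def P_def by (simp only: mult.assoc)
  have covered: "D * P * z \<in> ring_module.span S"
    if "z \<in> x ` {1..r} \<union> y ` jj ` {1..n + 1 - r}" for z
  proof -
    from that obtain q where "q \<le> n" "z = selected r jj x y q"
      unfolding selected_image[OF sel(1), symmetric] by auto
    with selected_in show ?thesis by simp
  qed
  have "D * P * y j \<in> ring_module.span S" if "j \<in> {1..s}" "j \<notin> jj ` {1..n + 1 - r}" for j
    unfolding P_def mult.assoc
    by (rule ring_module.span_scale, rule prod_mult_in_span[where j = j])
      (use that in \<open>simp_all add: annihilated\<close>)
  with covered show ?thesis by (meson UnI1 UnI2 image_eqI)
qed

theorem mainTheorem9:
  fixes n r s :: nat and d e jj :: "nat \<Rightarrow> nat"
    and F G :: "nat \<Rightarrow> 'k::field_char_0 mpoly"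
    and J :: "'k mpoly set" and A A' :: "'k mpoly"
  assumes "r + s \<ge> 1" and "n \<ge> 2"
    and "\<forall>i\<in>{1..r}. d i \<ge> 1" and "\<forall>j\<in>{1..s}. e j \<ge> 1"
    and "\<forall>i\<in>{1..r}. in_Pdeg n (d i) (F i)"
    and "\<forall>j\<in>{1..s}. in_Pdeg n (e j) (G j)"
    and "smooth_transversal n ({1..r} <+> {1..s}) (case_sum F G)"
    and "r \<le> n + 1"
    and "s \<ge> n + 1 - r"
    and "strict_mono_on {1..n + 1 - r} jj" and "jj ` {1..n + 1 - r} \<subseteq> {1..s}"
  defines "J \<equiv> ideal_gen
      ({(\<Sum>i=1..r. pdX k (F i) * Var (Mu i)) + (\<Sum>j=1..s. pdX k (G j) * Var (La j)) | k. k \<le> n}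
       \<union> F ` {1..r} \<union> {G j * Var (La j) | j. j \<in> {1..s}})"
    and "A \<equiv> (\<Sum>\<sigma> | \<sigma> permutes {0..n}. of_int (sign \<sigma>) *
       (\<Prod>p\<in>{0..n}. if p < r then pdX (\<sigma> p) (F (p + 1))
                     else pdX (\<sigma> p) (G (jj (p - r + 1)))))"
    and "A' \<equiv> A * (\<Prod>j\<in>{1..s} - jj ` {1..n + 1 - r}. G j)"
  shows "(\<forall>i\<in>{1..r}. A' * Var (Mu i) \<in> J) \<and> (\<forall>j\<in>{1..s}. A' * Var (La j) \<in> J)"
proof -
  have sel: "inj_on jj {1..n + 1 - r}" "jj ` {1..n + 1 - r} \<subseteq> {1..s}"
    using assms(10,11) by (auto intro: strict_mono_on_imp_inj_on)
  have A_det: "A = det (mat (Suc n) (Suc n)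
      (\<lambda>(p, k). selected r jj (\<lambda>i. pdX k (F i)) (\<lambda>j. pdX k (G j)) p))"
    unfolding A_def det_mat_Leibniz selected_def ..
  show ?thesis
    unfolding A'_def A_det J_def ideal_gen_eq_span
    by (rule det_complement_prod_mult_in_span[OF assms(8) sel]) (auto intro: ring_module.span_base)
qed

end
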